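(* Let $\ell\ge2$ and $m\ge1$ be integers, and define $T\colon\mathbb{C}^2\to\mathbb{C}^2$ by $T(z,w)=\bigl(w,\ z^\ell+\bar z\,w^m\bigr)$, regarded as a smooth map $\mathbb{R}^4\to\mathbb{R}^4$ with the complex orientations on source and target. Then the origin is the only point where $dT$ has rank $2$, and its index satisfies $\mathrm{ind}_0(T)=m(\ell-1)$.
   Context: Index of an isolated rank-$2$ point. Let $g\colon M\to N$ be a smooth map between oriented $4$-manifolds, and let $p$ be an isolated point with $\mathrm{rk}(dg_p)=2$. Choose oriented local coordinates $x=(x_1,\dots,x_4)$ centered at $p$ and $y$ centered at $g(p)$ in which \[ g(x)=\bigl(x_1,\ x_2,\ A(x),\ B(x)\bigr), \] where $A(0)=B(0)=0$ and the matrix $\begin{pmatrix}\partial A/\partial x_3&\partial A/\partial x_4\\ \partial B/\partial x_3&\partial B/\partial x_4\end{pmatrix}$ vanishes at $x=0$ and only there. The index $\mathrm{ind}_p(g)$ is the local degree at $0$ of the map \[ \hat g=\Bigl(\frac{\partial A}{\partial x_3},\ \frac{\partial B}{\partial x_3},\ \frac{\partial A}{\partial x_4},\ \frac{\partial B}{\partial x_4}\Bigr)\colon(\mathbb{R}^4,0)\to(\mathbb{R}^4,0), \] that is, the signed count of preimages near $0$ of a sufficiently small regular value. For $T$, writing $K(w,z)=z^\ell+\bar z w^m$ and using the complex coordinates $(w,z)$, this local degree equals the local degree at $0$ of \[ \kappa(w,z)=\Bigl(\frac{\partial K}{\partial z}+\frac{\partial K}{\partial\bar z},\ i\Bigl(\frac{\partial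 K}{\partial z}-\frac{\partial K}{\partial\bar z}\Bigr)\Bigr). \] *)

theory Defs
  imports "HOL-Analysis.Analysis"
begin

text \<open>Real coordinates on C^2 = R^4 with the complex orientation:
  a point (z,w) of C^2 corresponds to (Re z, Im z, Re w, Im w).\<close>

definition cpx4 :: "complex \<Rightarrow> complex \<Rightarrow> real^4" where
  "cpx4 a b = vector [Re a, Im a, Re b, Im b]"

definition Tmap :: "nat \<Rightarrow> nat \<Rightarrow> real^4 \<Rightarrow> real^4" where
  "Tmap l m x = (let z = Complex (x$1) (x$2); w = Complex (x$3) (x$4)
                 in cpx4 w (z ^ l + cnj z * w ^ m))"

text \<open>Oriented chart (w,z): u = (Re w, Im w, Re z, Im z) \<mapsto> (z,w).
  It is an even permutation of coordinates, hence orientation preserving.\<close>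
definition swap_chart :: "real^4 \<Rightarrow> real^4" where
  "swap_chart u = vector [u$3, u$4, u$1, u$2]"

definition partial_deriv :: "(real^4 \<Rightarrow> real^4) \<Rightarrow> 4 \<Rightarrow> real^4 \<Rightarrow> real^4" where
  "partial_deriv f i u = frechet_derivative f (at u) (axis i 1)"

text \<open>For g(x) = (x1, x2, A(x), B(x)), the map
  g-hat = (dA/dx3, dB/dx3, dA/dx4, dB/dx4).\<close>
definition rank2_hat :: "(real^4 \<Rightarrow> real^4) \<Rightarrow> real^4 \<Rightarrow> real^4" where
  "rank2_hat g u = vector [partial_deriv g 3 u $ 3, partial_deriv g 3 u $ 4,
                           partial_deriv g 4 u $ 3, partial_deriv g 4 u $ 4]"

definition regular_value_on :: "(real^'n \<Rightarrow> real^'n) \<Rightarrow> (real^'n) set \<Rightarrow> real^'n \<Rightarrow> bool" where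
  "regular_value_on f U y \<longleftrightarrow>
     (\<forall>x\<in>U. f x = y \<longrightarrow> f differentiable (at x) \<and> det (jacobian f (at x)) \<noteq> 0)"

definition has_local_degree_at0 :: "(real^'n \<Rightarrow> real^'n) \<Rightarrow> int \<Rightarrow> bool" where
  "has_local_degree_at0 f d \<longleftrightarrow> f 0 = 0 \<and>
     (\<exists>\<epsilon>>0. (\<forall>x\<in>cball 0 \<epsilon>. f x = 0 \<longrightarrow> x = 0) \<and>
        (\<exists>\<delta>>0. (\<forall>\<eta>>0. \<exists>y. norm y < min \<delta> \<eta> \<and> regular_value_on f (ball 0 \<epsilon>) y) \<and>
           (\<forall>y. norm y < \<delta> \<and> regular_value_on f (ball 0 \<epsilon>) y \<longrightarrow>
              finite {x\<in>ball 0 \<epsilon>. f x = y} \<and>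
              (\<Sum>x\<in>{x\<in>ball 0 \<epsilon>. f x = y}. sgn (det (jacobian f (at x)))) = of_int d)))"

end

theory Submission
  imports Defs
begin

text \<open>
  At p = (z, w) the differential of T sends (h_z, h_w) to
  (h_w, l z^(l-1) h_z + w^m conj h_z + m conj z w^(m-1) h_w). Its rank is 2 exactly when the
  real-linear map h_z \<mapsto> l z^(l-1) h_z + w^m conj h_z vanishes, i.e. when z = w = 0.

  In the chart (w, z) the Wirtinger derivatives of K = z^l + conj z w^m are
  K_z = l z^(l-1) and K_conj(z) = w^m, so the map g-hat is (w, z) \<mapsto> \<Lambda>(l z^(l-1), w^m) with
  \<Lambda>(p, q) = (p + q, i (p - q)). \<Lambda> is complex-linear with determinant -2i, so g-hat is a
  holomorphic map followed by an orientation-preserving isomorphism. Its Jacobian determinant is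
  4 |l (l-1) z^(l-2)|^2 |m w^(m-1)|^2 \<ge> 0. A small regular value (a, b) therefore has
  (l-1) m preimages, the pairs of solutions of l z^(l-1) = a and w^m = b, each counted with sign +1.
\<close>

lemma cpx4_nth [simp]:
  "cpx4 a b $ 1 = Re a" "cpx4 a b $ 2 = Im a" "cpx4 a b $ 3 = Re b" "cpx4 a b $ 4 = Im b"
  by (simp_all add: cpx4_def vector_def)

lemma cpx4_eq_iff: "cpx4 a b = cpx4 a' b' \<longleftrightarrow> a = a' \<and> b = b'"
  by (auto simp: vec_eq_iff forall_4 complex_eq_iff)

lemma norm_cpx4: "norm (cpx4 a b) = sqrt ((cmod a)\<^sup>2 + (cmod b)\<^sup>2)"
  by (simp add: norm_vec_def L2_set_def sum_4 cmod_power2 add.assoc)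

lemma cpx4_eq_sum_axis:
  "cpx4 a b = Re a *\<^sub>R axis 1 1 + Im a *\<^sub>R axis 2 1 + Re b *\<^sub>R axis 3 1 + Im b *\<^sub>R axis 4 1"
  by (simp add: vec_eq_iff forall_4 axis_def)

lemma has_derivative_cpx4 [derivative_intros]:
  assumes "(f has_derivative f') F" "(g has_derivative g') F"
  shows "((\<lambda>x. cpx4 (f x) (g x)) has_derivative (\<lambda>h. cpx4 (f' h) (g' h))) F"
  unfolding cpx4_eq_sum_axis by (intro derivative_eq_intros) (auto simp: assms)

lemma bounded_linear_cpx4:
  "bounded_linear f \<Longrightarrow> bounded_linear g \<Longrightarrow> bounded_linear (\<lambda>x. cpx4 (f x) (g x))"
  by (metis has_derivative_bounded_linear has_derivative_cpx4 bounded_linear_imp_has_derivative)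

definition cpx4_fst :: "real^4 \<Rightarrow> complex" where
  "cpx4_fst x = Complex (x$1) (x$2)"

definition cpx4_snd :: "real^4 \<Rightarrow> complex" where
  "cpx4_snd x = Complex (x$3) (x$4)"

lemma cpx4_fst_cpx4 [simp]: "cpx4_fst (cpx4 a b) = a"
  and cpx4_snd_cpx4 [simp]: "cpx4_snd (cpx4 a b) = b"
  by (simp_all add: cpx4_fst_def cpx4_snd_def)

lemma cpx4_fst_snd [simp]: "cpx4 (cpx4_fst x) (cpx4_snd x) = x"
  by (simp add: cpx4_fst_def cpx4_snd_def vec_eq_iff forall_4)

lemma cpx4_fst_axis [simp]:
  "cpx4_fst (axis 1 1) = 1" "cpx4_fst (axis 2 1) = \<i>" "cpx4_fst (axis 3 1) = 0" "cpx4_fst (axis 4 1) = 0"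
  and cpx4_snd_axis [simp]:
  "cpx4_snd (axis 1 1) = 0" "cpx4_snd (axis 2 1) = 0" "cpx4_snd (axis 3 1) = 1" "cpx4_snd (axis 4 1) = \<i>"
  by (simp_all add: cpx4_fst_def cpx4_snd_def axis_def complex_eq_iff)

lemma cpx4_fst_0 [simp]: "cpx4_fst 0 = 0" and cpx4_snd_0 [simp]: "cpx4_snd 0 = 0"
  by (simp_all add: cpx4_fst_def cpx4_snd_def complex_eq_iff)

lemma cpx4_eq_0_iff: "x = 0 \<longleftrightarrow> cpx4_fst x = 0 \<and> cpx4_snd x = 0"
  by (metis cpx4_fst_snd cpx4_fst_0 cpx4_snd_0)

lemma bounded_linear_cpx4_fst: "bounded_linear cpx4_fst"
  and bounded_linear_cpx4_snd: "bounded_linear cpx4_snd"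
  by (auto simp: linear_conv_bounded_linear[symmetric] cpx4_fst_def cpx4_snd_def complex_eq_iff
      intro!: linearI)

lemma has_derivative_cpx4_fst [derivative_intros]: "(cpx4_fst has_derivative cpx4_fst) F"
  and has_derivative_cpx4_snd [derivative_intros]: "(cpx4_snd has_derivative cpx4_snd) F"
  by (simp_all add: bounded_linear_imp_has_derivative bounded_linear_cpx4_fst bounded_linear_cpx4_snd)

lemma Tmap_eq: "Tmap l m x = cpx4 (cpx4_snd x) (cpx4_fst x ^ l + cnj (cpx4_fst x) * cpx4_snd x ^ m)"
  by (simp add: Tmap_def Let_def cpx4_fst_def cpx4_snd_def)

lemma Tmap_swap_chart_eq:
  "(Tmap l m \<circ> swap_chart) u = cpx4 (cpx4_fst u) (cpx4_snd u ^ l + cnj (cpx4_snd u) * cpx4_fst u ^ m)"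
  by (simp add: Tmap_eq cpx4_fst_def cpx4_snd_def swap_chart_def vector_def)

lemma has_derivative_Tmap:
  "(Tmap l m has_derivative (\<lambda>h. cpx4 (cpx4_snd h)
     (of_nat l * cpx4_fst x ^ (l - 1) * cpx4_fst h + cpx4_snd x ^ m * cnj (cpx4_fst h)
      + cnj (cpx4_fst x) * of_nat m * cpx4_snd x ^ (m - 1) * cpx4_snd h))) (at x)"
  unfolding Tmap_eq[abs_def]
  by (rule derivative_eq_intros refl | simp add: algebra_simps)+

lemma has_derivative_Tmap_swap_chart:
  "(Tmap l m \<circ> swap_chart has_derivative (\<lambda>h. cpx4 (cpx4_fst h)
     (of_nat l * cpx4_snd u ^ (l - 1) * cpx4_snd h + cpx4_fst u ^ m * cnj (cpx4_snd h)
      + cnj (cpx4_snd u) * of_nat m * cpx4_fst u ^ (m - 1) * cpx4_fst h))) (at u)"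
  unfolding Tmap_swap_chart_eq[abs_def]
  by (rule derivative_eq_intros refl | simp add: algebra_simps)+

lemma independent_echelon3:
  fixes a b c :: "real^'n"
  assumes "a$i = 1" "a$j = 0" "b$i = 0" "b$j = 1" "c$i = 0" "c$j = 0" "c \<noteq> 0"
  shows "independent {a, b, c}" "card {a, b, c} = 3"
proof -
  have b: "b \<notin> span {c}"
  proof
    assume "b \<in> span {c}"
    then obtain k where "b = k *\<^sub>R c" by (auto simp: span_singleton)
    then show False using assms by (metis vector_scaleR_component mult_zero_right zero_neq_one)
  qed
  have "independent {b, c}" by (rule independent_insertI[OF b]) (simp add: assms)
  moreover have "a \<notin> span {b, c}"
  proof
    assume "a \<in> span {b, c}"
    then obtain k k' where "a - k *\<^sub>R b = k' *\<^sub>R c" by (auto simp: span_insert span_singleton)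
    then have "(a - k *\<^sub>R b)$i = (k' *\<^sub>R c)$i" by simp
    then show False using assms by simp
  qed
  ultimately show "independent {a, b, c}" by (rule independent_insertI[rotated])
  have "a \<noteq> b" "a \<noteq> c" "b \<noteq> c" using assms by auto
  then show "card {a, b, c} = 3" by simp
qed

lemma rank_matrix_cpx4_semilinear_eq_2_iff:
  "rank (matrix (\<lambda>h. cpx4 (cpx4_snd h) (a * cpx4_fst h + b * cnj (cpx4_fst h) + e * cpx4_snd h)))
     = 2 \<longleftrightarrow> a = 0 \<and> b = 0"
  (is "rank (matrix ?D) = 2 \<longleftrightarrow> _")
proof -
  have "bounded_linear ?D"
    by (intro bounded_linear_cpx4 bounded_linear_cpx4_snd bounded_linear_add
        bounded_linear_compose[OF bounded_linear_mult_right] bounded_linear_cpx4_fst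
        bounded_linear_compose[OF bounded_linear_cnj])
  then have rank_eq: "rank (matrix ?D) = dim (range ?D)"
    by (simp add: rank_dim_range matrix_works bounded_linear.linear)
  define u v where "u = ?D (axis 3 1)" and "v = ?D (axis 4 1)"
  have uv: "u$1 = 1" "u$2 = 0" "v$1 = 0" "v$2 = 1" by (simp_all add: u_def v_def)
  have uv_range: "u \<in> range ?D" "v \<in> range ?D" unfolding u_def v_def by (rule rangeI)+
  show ?thesis
  proof
    assume rank2: "rank (matrix ?D) = 2"
    show "a = 0 \<and> b = 0"
    proof (rule ccontr)
      assume "\<not> (a = 0 \<and> b = 0)"
      then have "a + b \<noteq> 0 \<or> a * \<i> - b * \<i> \<noteq> 0" by (auto simp: complex_eq_iff)
      moreover have "cpx4 0 (a + b) \<in> range ?D" "cpx4 0 (a * \<i> - b * \<i>) \<in> range ?D"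
        using rangeI[of ?D "axis 1 1"] rangeI[of ?D "axis 2 1"] by simp_all
      ultimately obtain z where "z \<noteq> 0" and z_range: "cpx4 0 z \<in> range ?D" by blast
      then have "cpx4 0 z \<noteq> 0" by (metis cpx4_snd_0 cpx4_snd_cpx4)
      then have "independent {u, v, cpx4 0 z}" "card {u, v, cpx4 0 z} = 3"
        using independent_echelon3[of u 1 2 v "cpx4 0 z"] uv by simp_all
      then have "3 \<le> dim (range ?D)"
        using independent_card_le_dim[of "{u, v, cpx4 0 z}" "range ?D"] uv_range z_range by simp
      then show False using rank2 rank_eq by simp
    qed
  next
    assume "a = 0 \<and> b = 0"
    then have D: "?D h = h$3 *\<^sub>R u + h$4 *\<^sub>R v" for h
      by (simp add: u_def v_def vec_eq_iff forall_4 cpx4_snd_def axis_def algebra_simps)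
    have "range ?D \<subseteq> span {u, v}"
      unfolding D by (auto intro: span_add span_scale span_base)
    then have "dim (range ?D) \<le> card {u, v}"
      by (rule dim_le_card) simp
    moreover have "independent {u, v, axis 3 1}"
      using independent_echelon3(1)[of u 1 2 v "axis 3 1"] uv by (simp add: axis_def vec_eq_iff)
    then have "independent {u, v}" by (rule independent_mono) auto
    then have "card {u, v} \<le> dim (range ?D)"
      using independent_card_le_dim[of "{u, v}" "range ?D"] uv_range by simp
    moreover have "u \<noteq> v" using uv(1,3) by auto
    then have "card {u, v} = 2" by simp
    ultimately show "rank (matrix ?D) = 2" using rank_eq by simp
  qed
qed

lemma jacobian_eq_matrix: "(f has_derivative f') (at x) \<Longrightarrow> jacobian f (at x) = matrix f'"
  unfolding jacobian_def by (metis frechet_derivative_at)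

lemma rank_jacobian_Tmap_eq_2_iff:
  assumes "l \<ge> 2" "m \<ge> 1"
  shows "rank (jacobian (Tmap l m) (at p)) = 2 \<longleftrightarrow> p = 0"
proof -
  have "rank (jacobian (Tmap l m) (at p)) = 2 \<longleftrightarrow>
        of_nat l * cpx4_fst p ^ (l - 1) = 0 \<and> cpx4_snd p ^ m = 0"
    by (simp only: jacobian_eq_matrix[OF has_derivative_Tmap] rank_matrix_cpx4_semilinear_eq_2_iff)
  also have "\<dots> \<longleftrightarrow> p = 0"
    using assms by (simp add: cpx4_eq_0_iff)
  finally show ?thesis .
qed

lemma det_4:
  "det (A::'a::comm_ring_1^4^4) =
    A$1$1 * A$2$2 * A$3$3 * A$4$4 - A$1$1 * A$2$2 * A$3$4 * A$4$3 - A$1$1 * A$2$3 * A$3$2 * A$4$4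
    + A$1$1 * A$2$3 * A$3$4 * A$4$2 + A$1$1 * A$2$4 * A$3$2 * A$4$3 - A$1$1 * A$2$4 * A$3$3 * A$4$2
    - A$1$2 * A$2$1 * A$3$3 * A$4$4 + A$1$2 * A$2$1 * A$3$4 * A$4$3 + A$1$2 * A$2$3 * A$3$1 * A$4$4
    - A$1$2 * A$2$3 * A$3$4 * A$4$1 - A$1$2 * A$2$4 * A$3$1 * A$4$3 + A$1$2 * A$2$4 * A$3$3 * A$4$1
    + A$1$3 * A$2$1 * A$3$2 * A$4$4 - A$1$3 * A$2$1 * A$3$4 * A$4$2 - A$1$3 * A$2$2 * A$3$1 * A$4$4
    + A$1$3 * A$2$2 * A$3$4 * A$4$1 + A$1$3 * A$2$4 * A$3$1 * A$4$2 - A$1$3 * A$2$4 * A$3$2 * A$4$1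
    - A$1$4 * A$2$1 * A$3$2 * A$4$3 + A$1$4 * A$2$1 * A$3$3 * A$4$2 + A$1$4 * A$2$2 * A$3$1 * A$4$3
    - A$1$4 * A$2$2 * A$3$3 * A$4$1 - A$1$4 * A$2$3 * A$3$1 * A$4$2 + A$1$4 * A$2$3 * A$3$2 * A$4$1"
proof -
  have f1: "finite {2::4, 3, 4}" "1 \<notin> {2::4, 3, 4}" by auto
  have f2: "finite {3::4, 4}" "2 \<notin> {3::4, 4}" by auto
  have f3: "finite {4::4}" "3 \<notin> {4::4}" by auto
  show ?thesis
    unfolding det_def UNIV_4
    unfolding sum_over_permutations_insert[OF f1]
    unfolding sum_over_permutations_insert[OF f2]
    unfolding sum_over_permutations_insert[OF f3]
    unfolding permutes_sing
    by (simp add: sign_swap_id permutation_swap_id sign_compose permutation_compose swap_id_eq algebra_simps)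
qed

lemma det_matrix_cpx4_complex_linear:
  "det (matrix (\<lambda>h. cpx4 (a * cpx4_fst h + b * cpx4_snd h) (c * cpx4_fst h + d * cpx4_snd h)))
     = (cmod (a * d - b * c))\<^sup>2"
  unfolding det_4 cmod_power2 by (simp add: matrix_def algebra_simps power2_eq_square)

text \<open>
  If K = A + i B is a function of \<zeta> = x3 + i x4 with Wirtinger derivatives p = \<partial>K/\<partial>\<zeta> and
  q = \<partial>K/\<partial>conj(\<zeta>), then \<partial>K/\<partial>x3 = p + q and \<partial>K/\<partial>x4 = i (p - q); so
  \<^term>\<open>wirtinger_vec p q\<close> is the vector (\<partial>A/\<partial>x3, \<partial>B/\<partial>x3, \<partial>A/\<partial>x4, \<partial>B/\<partial>x4) of \<^const>\<open>rank2_hat\<close>.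
\<close>

definition wirtinger_vec :: "complex \<Rightarrow> complex \<Rightarrow> real^4" where
  "wirtinger_vec p q = cpx4 (p + q) (\<i> * (p - q))"

lemma wirtinger_vec_eq_iff: "wirtinger_vec p q = wirtinger_vec p' q' \<longleftrightarrow> p = p' \<and> q = q'"
  by (auto simp: wirtinger_vec_def cpx4_eq_iff complex_eq_iff)

lemma wirtinger_vec_0 [simp]: "wirtinger_vec 0 0 = 0"
  by (simp add: wirtinger_vec_def cpx4_eq_0_iff)

lemma surj_wirtinger_vec: "\<exists>p q. y = wirtinger_vec p q"
proof -
  let ?z = "cpx4_fst y" and ?w = "cpx4_snd y"
  have "wirtinger_vec ((?z - \<i> * ?w) / 2) ((?z + \<i> * ?w) / 2) = cpx4 ?z ?w"
    unfolding wirtinger_vec_def cpx4_eq_iff by (simp add: field_simps)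
  then show ?thesis by (metis cpx4_fst_snd)
qed

lemma norm_wirtinger_vec: "norm (wirtinger_vec p q) = sqrt (2 * ((cmod p)\<^sup>2 + (cmod q)\<^sup>2))"
  unfolding wirtinger_vec_def norm_cpx4 cmod_power2
  by (simp add: algebra_simps power2_eq_square)

lemma cmod_le_norm_wirtinger_vec:
  "cmod p \<le> norm (wirtinger_vec p q)" "cmod q \<le> norm (wirtinger_vec p q)"
  unfolding norm_wirtinger_vec by (auto intro!: real_le_rsqrt)

lemma rank2_hat_eq_wirtinger_vec:
  assumes "(g has_derivative (\<lambda>h. cpx4 (L h) (P * cpx4_snd h + Q * cnj (cpx4_snd h) + R * cpx4_fst h))) (at u)"
  shows "rank2_hat g u = wirtinger_vec P Q"
  unfolding rank2_hat_def partial_deriv_def frechet_derivative_at[OF assms, symmetric]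
  by (simp add: wirtinger_vec_def vec_eq_iff forall_4 vector_def algebra_simps)

definition wirtinger_power_map :: "complex \<Rightarrow> nat \<Rightarrow> nat \<Rightarrow> real^4 \<Rightarrow> real^4" where
  "wirtinger_power_map c n m u = wirtinger_vec (c * cpx4_snd u ^ n) (cpx4_fst u ^ m)"

lemma rank2_hat_Tmap_swap_chart:
  "rank2_hat (Tmap l m \<circ> swap_chart) = wirtinger_power_map (of_nat l) (l - 1) m"
  by (rule ext, unfold wirtinger_power_map_def)
    (rule rank2_hat_eq_wirtinger_vec[OF has_derivative_Tmap_swap_chart])

lemma has_derivative_wirtinger_power_map:
  "(wirtinger_power_map c n m has_derivative (\<lambda>h. wirtinger_vec
      (c * of_nat n * cpx4_snd u ^ (n - 1) * cpx4_snd h) (of_nat m * cpx4_fst u ^ (m - 1) * cpx4_fst h))) (at u)"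
  unfolding wirtinger_power_map_def[abs_def] wirtinger_vec_def
  by (rule derivative_eq_intros refl | simp add: algebra_simps)+

lemma det_jacobian_wirtinger_power_map:
  "det (jacobian (wirtinger_power_map c n m) (at u))
     = 4 * (cmod (c * of_nat n * cpx4_snd u ^ (n - 1)))\<^sup>2 * (cmod (of_nat m * cpx4_fst u ^ (m - 1)))\<^sup>2"
proof -
  define A B where "A = c * of_nat n * cpx4_snd u ^ (n - 1)" and "B = of_nat m * cpx4_fst u ^ (m - 1)"
  have D: "(\<lambda>h. wirtinger_vec
      (c * of_nat n * cpx4_snd u ^ (n - 1) * cpx4_snd h) (of_nat m * cpx4_fst u ^ (m - 1) * cpx4_fst h))
      = (\<lambda>h. cpx4 (B * cpx4_fst h + A * cpx4_snd h) ((- \<i> * B) * cpx4_fst h + (\<i> * A) * cpx4_snd h))"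
    by (simp add: A_def B_def wirtinger_vec_def algebra_simps)
  have "det (jacobian (wirtinger_power_map c n m) (at u)) = (cmod (B * (\<i> * A) - A * (- \<i> * B)))\<^sup>2"
    unfolding jacobian_eq_matrix[OF has_derivative_wirtinger_power_map] D
    by (rule det_matrix_cpx4_complex_linear)
  also have "B * (\<i> * A) - A * (- \<i> * B) = 2 * \<i> * A * B"
    by (simp add: algebra_simps)
  finally show ?thesis
    by (simp add: A_def B_def norm_mult power_mult_distrib)
qed

lemma det_jacobian_wirtinger_power_map_nonzero_iff:
  assumes "c \<noteq> 0" "n > 0" "m > 0"
  shows "det (jacobian (wirtinger_power_map c n m) (at u)) \<noteq> 0
     \<longleftrightarrow> (n = 1 \<or> cpx4_snd u \<noteq> 0) \<and> (m = 1 \<or> cpx4_fst u \<noteq> 0)"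
  using assms by (auto simp: det_jacobian_wirtinger_power_map)

lemma wirtinger_power_map_eq_iff:
  "wirtinger_power_map c n m u = wirtinger_vec p q \<longleftrightarrow> c * cpx4_snd u ^ n = p \<and> cpx4_fst u ^ m = q"
  by (simp add: wirtinger_power_map_def wirtinger_vec_eq_iff)

lemma preimage_wirtinger_power_map:
  "{u. wirtinger_power_map c n m u = wirtinger_vec p q}
     = (\<lambda>(z, w). cpx4 z w) ` ({z. z ^ m = q} \<times> {w. c * w ^ n = p})"
proof -
  have "u \<in> (\<lambda>(z, w). cpx4 z w) ` ({z. z ^ m = q} \<times> {w. c * w ^ n = p})"
    if "cpx4_fst u ^ m = q" "c * cpx4_snd u ^ n = p" for u
    using that by (auto intro!: image_eqI[of _ _ "(cpx4_fst u, cpx4_snd u)"])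
  then show ?thesis by (auto simp: wirtinger_power_map_eq_iff)
qed

lemma ex_complex_nth_root:
  assumes "n > 0"
  shows "\<exists>z::complex. z ^ n = c"
proof (cases "c = 0")
  case True
  then show ?thesis using assms by auto
next
  case False
  then have "card {z::complex. z ^ n = c} > 0" using card_nth_roots assms by simp
  then have "{z::complex. z ^ n = c} \<noteq> {}" using card_gt_0_iff by blast
  then show ?thesis by blast
qed

lemma card_preimage_wirtinger_power_map:
  assumes "c \<noteq> 0" "n > 0" "m > 0"
    and regular: "\<And>u. wirtinger_power_map c n m u = y
                   \<Longrightarrow> det (jacobian (wirtinger_power_map c n m) (at u)) \<noteq> 0"
  shows "finite {u. wirtinger_power_map c n m u = y}"
    and "card {u. wirtinger_power_map c n m u = y} = m * n"
proof -
  obtain p q where y: "y = wirtinger_vec p q" using surj_wirtinger_vec by blast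
  have roots_w: "{w. c * w ^ n = p} = {w. w ^ n = p / c}"
    using assms(1) by (auto simp: field_simps)
  obtain z0 w0 where "z0 ^ m = q" "c * w0 ^ n = p"
    using ex_complex_nth_root[OF assms(3)] ex_complex_nth_root[OF assms(2)] roots_w by blast
  \<comment> \<open>Regularity at the preimage (z0, w0) excludes a vanishing right-hand side in a root
    equation of degree > 1, whose only root would be a critical point.\<close>
  then have "wirtinger_power_map c n m (cpx4 z0 w0) = y"
    by (simp add: y wirtinger_power_map_eq_iff)
  then have "det (jacobian (wirtinger_power_map c n m) (at (cpx4 z0 w0))) \<noteq> 0"
    by (rule regular)
  then have "(n = 1 \<or> w0 \<noteq> 0) \<and> (m = 1 \<or> z0 \<noteq> 0)"
    by (simp add: det_jacobian_wirtinger_power_map_nonzero_iff assms(1-3))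
  then have "n = 1 \<or> p / c \<noteq> 0" "m = 1 \<or> q \<noteq> 0"
    using \<open>z0 ^ m = q\<close> \<open>c * w0 ^ n = p\<close> assms(1) by auto
  then have "card {z. z ^ m = q} = m" "card {w. c * w ^ n = p} = n"
    using assms(2,3) by (auto simp: roots_w card_nth_roots)
  moreover have "inj_on (\<lambda>(z, w). cpx4 z w) ({z. z ^ m = q} \<times> {w. c * w ^ n = p})"
    by (auto simp: inj_on_def cpx4_eq_iff)
  ultimately show "card {u. wirtinger_power_map c n m u = y} = m * n"
    by (simp add: y preimage_wirtinger_power_map card_image card_cartesian_product)
  show "finite {u. wirtinger_power_map c n m u = y}"
    using assms(2,3) by (simp add: y preimage_wirtinger_power_map roots_w finite_nth_roots)
qed

lemma norm_less_2_if_wirtinger_power_map_small: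
  assumes "norm (wirtinger_power_map c n m u) < min 1 (cmod c)" "n > 0" "m > 0"
  shows "norm u < 2"
proof -
  have "cmod c * cmod (cpx4_snd u) ^ n < cmod c" "cmod (cpx4_fst u) ^ m < 1"
    using assms(1) cmod_le_norm_wirtinger_vec[where p = "c * cpx4_snd u ^ n" and q = "cpx4_fst u ^ m"]
    by (auto simp: wirtinger_power_map_def norm_mult norm_power)
  then have "cmod (cpx4_snd u) < 1" "cmod (cpx4_fst u) < 1"
    by (metis mult_less_cancel_left2 power_less1_D norm_ge_zero)+
  then have "sqrt ((cmod (cpx4_fst u))\<^sup>2 + (cmod (cpx4_snd u))\<^sup>2) < 2"
    using sqrt_sum_squares_le_sum[of "cmod (cpx4_fst u)" "cmod (cpx4_snd u)"] by simp
  then show ?thesis using norm_cpx4[of "cpx4_fst u" "cpx4_snd u"] by simp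
qed

lemma has_local_degree_at0_wirtinger_power_map:
  assumes "c \<noteq> 0" "n > 0" "m > 0"
  shows "has_local_degree_at0 (wirtinger_power_map c n m) (int (m * n))"
proof -
  let ?F = "wirtinger_power_map c n m"
  define \<delta> where "\<delta> = min 1 (cmod c)"
  have "\<delta> > 0" using assms(1) by (simp add: \<delta>_def)
  have zero_iff: "?F u = 0 \<longleftrightarrow> u = 0" for u
    using assms wirtinger_power_map_eq_iff[of c n m u 0 0] by (auto simp: cpx4_eq_0_iff)
  have differentiable: "?F differentiable (at u)" for u
    using has_derivative_wirtinger_power_map by (rule differentiableI)
  have regular_near_0: "\<exists>y. norm y < min \<delta> \<eta> \<and> regular_value_on ?F (ball 0 2) y" if "\<eta> > 0" for \<eta>
  proof -
    define t where "t = min \<delta> \<eta> / 4"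
    have "t > 0" using \<open>\<delta> > 0\<close> that by (simp add: t_def)
    have "norm (wirtinger_vec (of_real t) (of_real t)) = 2 * t"
      using \<open>t > 0\<close> by (simp add: norm_wirtinger_vec real_sqrt_mult power2_eq_square)
    moreover have "regular_value_on ?F (ball 0 2) (wirtinger_vec (of_real t) (of_real t))"
      unfolding regular_value_on_def
    proof (intro ballI impI conjI differentiable)
      fix u assume "?F u = wirtinger_vec (of_real t) (of_real t)"
      then have "cpx4_snd u \<noteq> 0" "cpx4_fst u \<noteq> 0"
        using \<open>t > 0\<close> assms by (auto simp: wirtinger_power_map_eq_iff zero_power)
      then show "det (jacobian ?F (at u)) \<noteq> 0"
        using assms by (simp add: det_jacobian_wirtinger_power_map_nonzero_iff)
    qed
    moreover have "2 * t < min \<delta> \<eta>"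
      using \<open>t > 0\<close> by (auto simp: t_def min_def)
    ultimately show ?thesis by (metis)
  qed
  have count: "finite {u \<in> ball 0 2. ?F u = y}
      \<and> (\<Sum>u\<in>{u \<in> ball 0 2. ?F u = y}. sgn (det (jacobian ?F (at u)))) = of_int (int (m * n))"
    if "norm y < \<delta>" and regular: "regular_value_on ?F (ball 0 2) y" for y
  proof -
    have preimage: "{u \<in> ball 0 2. ?F u = y} = {u. ?F u = y}"
      using norm_less_2_if_wirtinger_power_map_small assms that(1) by (auto simp: \<delta>_def)
    then have det_nonzero: "det (jacobian ?F (at u)) \<noteq> 0" if "?F u = y" for u
      using regular that unfolding regular_value_on_def by blast
    have "sgn (det (jacobian ?F (at u))) = 1" if "?F u = y" for u
      using det_nonzero[OF that] by (simp add: det_jacobian_wirtinger_power_map sgn_if)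
    moreover have "finite {u. ?F u = y}" "card {u. ?F u = y} = m * n"
      using card_preimage_wirtinger_power_map[OF assms, of y] det_nonzero by blast+
    ultimately show ?thesis
      unfolding preimage by simp
  qed
  show ?thesis
    unfolding has_local_degree_at0_def
    using zero_iff regular_near_0 count \<open>\<delta> > 0\<close> by (intro conjI exI[of _ 2] exI[of _ \<delta>]) auto
qed

theorem mainTheorem5:
  fixes l m :: nat
  assumes "l \<ge> 2" and "m \<ge> 1"
  shows "(\<forall>p. rank (jacobian (Tmap l m) (at p)) = 2 \<longleftrightarrow> p = 0)
         \<and> has_local_degree_at0 (rank2_hat (Tmap l m \<circ> swap_chart)) (int m * (int l - 1))"
proof -
  have degree_eq: "int m * (int l - 1) = int (m * (l - 1))"
    using assms(1) by (simp add: of_nat_diff)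
  have "has_local_degree_at0 (wirtinger_power_map (of_nat l) (l - 1) m) (int (m * (l - 1)))"
    using assms by (intro has_local_degree_at0_wirtinger_power_map) auto
  then show ?thesis
    unfolding degree_eq rank2_hat_Tmap_swap_chart using rank_jacobian_Tmap_eq_2_iff[OF assms] by blast
qed

end
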